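(* For every odd integer $\ell\ge 17$ there exists a palindrome of length $\ell$ over a ternary alphabet whose critical exponent is exactly $\tfrac{7}{4}$.
   Context: A word $x=x[1..n]$ has period $q$ if $x[i]=x[i+q]$ for $1\le i\le n-q$. For integers $p>q\ge1$, $x$ is a $(p/q)$-power if it has length $p$ and period $q$. The exponent $\exp(w)$ of a finite nonempty word $w$ is the largest rational $p/q$ such that $w$ is a $(p/q)$-power. The critical exponent of $w$ is the maximum of $\exp(w')$ over all nonempty factors $w'$ of $w$. A palindrome is a word equal to its reversal. *)

theory Defs
  imports Complex_Main "HOL-Library.Sublist"
begin

definition has_period :: "'a list \<Rightarrow> nat \<Rightarrow> bool" where
  "has_period x q \<longleftrightarrow> 1 \<le> q \<and> (\<forall>i. i + q < length x \<longrightarrow> x ! i = x ! (i + q))"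

definition word_exp :: "'a list \<Rightarrow> rat" where
  "word_exp w = Max {of_nat (length w) / of_nat q | q. has_period w q \<and> q \<le> length w}"

definition critical_exponent :: "'a list \<Rightarrow> rat" where
  "critical_exponent w = Max {word_exp u | u. sublist u w \<and> u \<noteq> []}"

definition palindrome :: "'a list \<Rightarrow> bool" where
  "palindrome w \<longleftrightarrow> rev w = w"

end

theory Submission
  imports Defs
begin

text \<open>
  The palindromes are central factors of the iterates \<open>(morph ^^ k) [0]\<close>. Since \<open>morph0\<close> is
  a palindrome, \<open>morph\<close> commutes with reversal, so every iterate is a palindrome of odd length,
  and so are its central factors of odd length.

  No iterate contains a repetition of exponent greater than 7/4. Given one with period \<open>p\<close> in
  \<open>morph w\<close>, shorten it to length \<open>7 p div 4 + 1\<close>. If \<open>p < 12\<close> it lies inside the image of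
  two consecutive letters, which a finite check excludes. Otherwise it contains two occurrences,
  \<open>p\<close> apart, of a window of length 10, and such a window determines its position modulo 19;
  hence \<open>p = 19 P\<close>, and cancelling the shifts yields a repetition of exponent greater than 7/4
  with period \<open>P\<close> in \<open>w\<close>.

  Finally every block of \<open>morph w\<close> contains at offset 1 a shifted copy of 1202120, which has
  exponent exactly 7/4, and the central factor of length \<open>2 m + 1 \<ge> 17\<close> of
  \<open>(morph ^^ Suc m) [0]\<close> contains the one in the central block.
\<close>

definition periodic_factor :: "'a list \<Rightarrow> nat \<Rightarrow> nat \<Rightarrow> nat \<Rightarrow> bool" where
  "periodic_factor w i n p \<longleftrightarrow>
     1 \<le> p \<and> i + n \<le> length w \<and> (\<forall>k. k + p < n \<longrightarrow> w ! (i + k) = w ! (i + k + p))"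

lemma has_period_iff_periodic_factor: "has_period u p \<longleftrightarrow> periodic_factor u 0 (length u) p"
  by (auto simp: has_period_def periodic_factor_def)

lemma periodic_factor_shorten:
  "periodic_factor w i n p \<Longrightarrow> n' \<le> n \<Longrightarrow> periodic_factor w i n' p"
  by (auto simp: periodic_factor_def)

lemma periodic_factor_sublist:
  assumes "periodic_factor u i n p" and "sublist u w"
  shows "\<exists>i'. periodic_factor w i' n p"
proof -
  obtain ps ss where w: "w = ps @ u @ ss"
    using assms(2) by (auto simp: sublist_def)
  have "periodic_factor w (length ps + i) n p"
    using assms(1) by (auto simp: periodic_factor_def w nth_append add.assoc)
  then show ?thesis ..
qed

lemma finite_word_exp_candidates:
  "finite {of_nat (length u) / of_nat q :: rat | q. has_period u q \<and> q \<le> length u}"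
  by (rule finite_image_set) (rule finite_subset[of _ "{..length u}"], auto)

lemma word_exp_ge:
  "has_period u q \<Longrightarrow> q \<le> length u \<Longrightarrow> of_nat (length u) / of_nat q \<le> word_exp u"
  unfolding word_exp_def by (rule Max_ge[OF finite_word_exp_candidates]) blast

lemma word_exp_le:
  assumes "u \<noteq> []"
    and "\<And>q. has_period u q \<Longrightarrow> q \<le> length u \<Longrightarrow> of_nat (length u) \<le> r * of_nat q"
  shows "word_exp u \<le> r"
  unfolding word_exp_def
proof (rule Max.boundedI[OF finite_word_exp_candidates])
  have "has_period u (length u)"
    using assms(1) by (simp add: has_period_def Suc_le_eq)
  then show "{of_nat (length u) / of_nat q :: rat | q. has_period u q \<and> q \<le> length u} \<noteq> {}"
    by blast
next
  fix x assume "x \<in> {of_nat (length u) / of_nat q :: rat | q. has_period u q \<and> q \<le> length u}"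
  then obtain q where q: "has_period u q" "q \<le> length u" and x: "x = of_nat (length u) / of_nat q"
    by blast
  have "0 < q" using q(1) by (simp add: has_period_def)
  then show "x \<le> r" using assms(2)[OF q] by (simp add: x divide_le_eq)
qed

lemma finite_critical_exponent_candidates:
  "finite {word_exp u | u. sublist u w \<and> u \<noteq> []}"
proof -
  have "finite {u. sublist u w}"
    by (rule finite_subset[of _ "set (sublists w)"]) auto
  then show ?thesis
    by (rule finite_subset[rotated, OF finite_imageI]) auto
qed

lemma word_exp_le_critical_exponent:
  assumes "sublist u w" and "u \<noteq> []"
  shows "word_exp u \<le> critical_exponent w"
  unfolding critical_exponent_def
  by (rule Max_ge[OF finite_critical_exponent_candidates]) (use assms in blast)

lemma critical_exponent_le:
  assumes "w \<noteq> []" and "\<And>u. sublist u w \<Longrightarrow> u \<noteq> [] \<Longrightarrow> word_exp u \<le> r"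
  shows "critical_exponent w \<le> r"
proof -
  have "{word_exp u | u. sublist u w \<and> u \<noteq> []} \<noteq> {}"
    using assms(1) by blast
  then show ?thesis
    unfolding critical_exponent_def using assms(2)
    by (auto intro!: Max.boundedI[OF finite_critical_exponent_candidates])
qed

definition seven_fourths_free :: "'a list \<Rightarrow> bool" where
  "seven_fourths_free w \<longleftrightarrow> (\<forall>i n p. periodic_factor w i n p \<longrightarrow> 4 * n \<le> 7 * p)"

lemma seven_fourths_free_sublist:
  "seven_fourths_free w \<Longrightarrow> sublist u w \<Longrightarrow> seven_fourths_free u"
  by (meson periodic_factor_sublist seven_fourths_free_def)

lemma seven_fourths_free_word_exp_le:
  assumes "seven_fourths_free u" and "u \<noteq> []"
  shows "word_exp u \<le> 7 / 4"
proof (rule word_exp_le[OF assms(2)])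
  fix q assume "has_period u q"
  then have "4 * length u \<le> 7 * q"
    using assms(1) by (auto simp: seven_fourths_free_def has_period_iff_periodic_factor)
  then have "of_nat (4 * length u) \<le> (of_nat (7 * q) :: rat)"
    by (simp only: of_nat_le_iff)
  then show "of_nat (length u) \<le> (7 / 4 :: rat) * of_nat q" by simp
qed

lemma critical_exponent_eq_seven_fourths:
  assumes "seven_fourths_free w" and "sublist u w" and "length u = 7" and "has_period u 4"
  shows "critical_exponent w = 7 / 4"
proof (rule antisym)
  have "w \<noteq> []" using assms(2,3) by auto
  then show "critical_exponent w \<le> 7 / 4"
    by (rule critical_exponent_le)
       (use assms(1) seven_fourths_free_sublist seven_fourths_free_word_exp_le in blast)
  have "7 / 4 \<le> word_exp u"
    using word_exp_ge[OF assms(4)] assms(3) by simp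
  also have "\<dots> \<le> critical_exponent w"
    using assms(2,3) by (intro word_exp_le_critical_exponent) auto
  finally show "7 / 4 \<le> critical_exponent w" .
qed

definition morph0 :: "nat list" where
  "morph0 = [0,1,2,0,2,1,2,0,1,2,1,0,2,1,2,0,2,1,0]"

definition morph :: "nat list \<Rightarrow> nat list" where
  "morph w = map (\<lambda>j. (morph0 ! (j mod 19) + w ! (j div 19)) mod 3) [0..<19 * length w]"

lemma length_morph0 [simp]: "length morph0 = 19"
  by (simp add: morph0_def)

lemma rev_morph0: "rev morph0 = morph0"
  by (simp add: morph0_def)

lemma length_morph [simp]: "length (morph w) = 19 * length w"
  by (simp add: morph_def)

lemma nth_morph:
  assumes "t < length w" and "x < 19"
  shows "morph w ! (19 * t + x) = (morph0 ! x + w ! t) mod 3"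
proof -
  have "19 * t + x < 19 * length w" using assms by linarith
  then show ?thesis using assms(2) by (simp add: morph_def)
qed

lemma morph_split_index:
  assumes "j < 19 * length w"
  obtains t x where "j = 19 * t + x" "t < length w" "x < 19"
proof
  show "j = 19 * (j div 19) + j mod 19" by simp
qed (use assms in auto)

lemma set_morph: "set (morph w) \<subseteq> {..<3}"
  by (auto simp: morph_def)

lemma rev_morph: "rev (morph w) = morph (rev w)"
proof (rule nth_equalityI)
  fix j assume "j < length (rev (morph w))"
  then have "j < 19 * length w" by simp
  then obtain t x where j: "j = 19 * t + x" "t < length w" "x < 19"
    by (rule morph_split_index)
  have "19 * length w - Suc j = 19 * (length w - Suc t) + (18 - x)"
    using j by linarith
  then have "rev (morph w) ! j = morph w ! (19 * (length w - Suc t) + (18 - x))"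
    using \<open>j < 19 * length w\<close> by (simp add: rev_nth)
  also have "\<dots> = (morph0 ! (18 - x) + w ! (length w - Suc t)) mod 3"
    using j by (intro nth_morph) auto
  also have "morph0 ! (18 - x) = morph0 ! x"
    using rev_nth[of x morph0] j(3) by (simp add: rev_morph0)
  also have "w ! (length w - Suc t) = rev w ! t"
    using j(2) by (simp add: rev_nth)
  also have "(morph0 ! x + rev w ! t) mod 3 = morph (rev w) ! j"
    using j by (simp add: nth_morph)
  finally show "rev (morph w) ! j = morph (rev w) ! j" .
qed simp

definition pair_images :: "nat list list" where
  "pair_images = map (\<lambda>(a, b). morph [a, b]) [(a, b) \<leftarrow> List.product [0..<3] [0..<3]. a \<noteq> b]"

lemma morph_pair_in_pair_images:
  assumes "a < 3" and "b < 3" and "a \<noteq> b"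
  shows "morph [a, b] \<in> set pair_images"
  unfolding pair_images_def set_map
  by (rule rev_image_eqI[of "(a, b)"]) (use assms in auto)

lemma length_pair_images: "u \<in> set pair_images \<Longrightarrow> length u = 38"
  by (auto simp: pair_images_def)

lemma seven_fourths_free_nth_neq:
  assumes "seven_fourths_free w" and "Suc t < length w"
  shows "w ! t \<noteq> w ! Suc t"
proof
  assume "w ! t = w ! Suc t"
  then have "periodic_factor w t 2 1"
    using assms(2) by (auto simp: periodic_factor_def)
  then have "4 * 2 \<le> 7 * (1::nat)"
    using assms(1) unfolding seven_fourths_free_def by blast
  then show False by simp
qed

lemma morph_factor_in_pair_image:
  assumes "seven_fourths_free w" and "set w \<subseteq> {..<3}"
    and "j + n \<le> 19 * length w" and "n \<le> 20" and "0 < n"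
  obtains u where "u \<in> set pair_images"
    and "\<And>k. k < n \<Longrightarrow> morph w ! (j + k) = u ! (j mod 19 + k)"
proof -
  have "j < 19 * length w" using assms(3,5) by linarith
  then obtain s x where j: "j = 19 * s + x" "s < length w" "x < 19"
    by (rule morph_split_index)
  define a where "a = w ! s"
  define b where "b = (if Suc s < length w then w ! Suc s else (a + 1) mod 3)"
  have "a < 3" "b < 3"
    using assms(2) j(2) by (auto simp: a_def b_def dest!: nth_mem)
  moreover have "a \<noteq> b"
  proof (cases "Suc s < length w")
    case True
    then show ?thesis using seven_fourths_free_nth_neq[OF assms(1)] by (simp add: a_def b_def)
  qed (simp add: b_def, presburger)
  moreover have "morph w ! (j + k) = morph [a, b] ! (j mod 19 + k)" if "k < n" for k
  proof -
    define d where "d = (x + k) div 19"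
    define y where "y = (x + k) mod 19"
    have xk: "x + k = 19 * d + y" "d < 2" "y < 19"
      using j(3) assms(4) that by (auto simp: d_def y_def)
    have "s + d < length w" using assms(3) that j xk by linarith
    have "j + k = 19 * (s + d) + y" "j mod 19 + k = 19 * d + y"
      using j xk by simp_all
    then have "morph w ! (j + k) = (morph0 ! y + w ! (s + d)) mod 3"
      "morph [a, b] ! (j mod 19 + k) = (morph0 ! y + [a, b] ! d) mod 3"
      using nth_morph[OF \<open>s + d < length w\<close> xk(3)] nth_morph[of d "[a, b]" y] xk by simp_all
    moreover have "w ! (s + d) = [a, b] ! d"
      using \<open>s + d < length w\<close> xk(2) by (auto simp: a_def b_def less_2_cases_iff)
    ultimately show ?thesis by simp
  qed
  ultimately show ?thesis
    by (intro that[of "morph [a, b]"] morph_pair_in_pair_images) auto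
qed

definition pair_image_windows :: "(nat list \<times> nat) list" where
  "pair_image_windows = [(take 10 (drop x u), x). u \<leftarrow> pair_images, x \<leftarrow> [0..<19]]"

text \<open>No window of length 10 occurs in images of two-letter words at two different offsets
  below 19.\<close>

lemma pair_image_windows_determine_offset: "distinct (map fst (remdups pair_image_windows))"
  by code_simp

lemma pair_images_avoid_short_periods:
  "\<forall>u\<in>set pair_images. \<forall>x\<in>set [0..<19]. \<forall>p\<in>set [1..<12].
     \<exists>k\<in>set [0..<7 * p div 4 + 1 - p]. u ! (x + k) \<noteq> u ! (x + k + p)"
  by code_simp

lemma pair_image_short_period_mismatch:
  assumes "u \<in> set pair_images" and "x < 19" and "1 \<le> p" and "p < 12"
  obtains k where "k + p < 7 * p div 4 + 1" and "u ! (x + k) \<noteq> u ! (x + k + p)"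
proof -
  have "\<exists>k\<in>set [0..<7 * p div 4 + 1 - p]. u ! (x + k) \<noteq> u ! (x + k + p)"
    using pair_images_avoid_short_periods assms by simp
  then show ?thesis
    using that by (auto simp: less_diff_conv)
qed

lemma morph_window_offset:
  assumes "seven_fourths_free w" and "set w \<subseteq> {..<3}"
    and "i + 10 \<le> 19 * length w" and "j + 10 \<le> 19 * length w"
    and "\<And>k. k < 10 \<Longrightarrow> morph w ! (i + k) = morph w ! (j + k)"
  shows "i mod 19 = j mod 19"
proof -
  obtain u where u: "u \<in> set pair_images" "\<And>k. k < 10 \<Longrightarrow> morph w ! (i + k) = u ! (i mod 19 + k)"
    using morph_factor_in_pair_image[OF assms(1-3)] by auto
  obtain v where v: "v \<in> set pair_images" "\<And>k. k < 10 \<Longrightarrow> morph w ! (j + k) = v ! (j mod 19 + k)"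
    using morph_factor_in_pair_image[OF assms(1,2,4)] by auto
  have window_mem: "(take 10 (drop x u'), x) \<in> set (remdups pair_image_windows)"
    if "u' \<in> set pair_images" "x < 19" for u' x
    using that by (force simp: pair_image_windows_def)
  have "take 10 (drop (i mod 19) u) = take 10 (drop (j mod 19) v)"
    using u v assms(5) length_pair_images by (intro nth_equalityI) auto
  then have "(take 10 (drop (i mod 19) u), j mod 19) \<in> set (remdups pair_image_windows)"
    using window_mem[OF v(1), of "j mod 19"] by simp
  moreover have "(take 10 (drop (i mod 19) u), i mod 19) \<in> set (remdups pair_image_windows)"
    using window_mem[OF u(1), of "i mod 19"] by simp
  ultimately show ?thesis
    by (rule eq_key_imp_eq_value[OF pair_image_windows_determine_offset, rotated])
qed

lemma morph_nth_cancel: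
  assumes "set w \<subseteq> {..<3}" and "t < length w" and "t' < length w" and "x < 19"
    and "morph w ! (19 * t + x) = morph w ! (19 * t' + x)"
  shows "w ! t = w ! t'"
proof -
  have "w ! t < 3" "w ! t' < 3"
    using assms(1-3) nth_mem by blast+
  moreover have "(morph0 ! x + w ! t) mod 3 = (morph0 ! x + w ! t') mod 3"
    using assms(2-5) by (simp add: nth_morph)
  ultimately show ?thesis by presburger
qed

lemma morph_periodic_factor_pullback:
  assumes "set w \<subseteq> {..<3}" and "periodic_factor (morph w) i n (19 * p)"
  shows "periodic_factor w (i div 19) ((n + 18) div 19) p"
proof -
  have p: "1 \<le> p" and len: "i + n \<le> 19 * length w"
    and per: "\<And>k. k + 19 * p < n \<Longrightarrow> morph w ! (i + k) = morph w ! (i + k + 19 * p)"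
    using assms(2) by (auto simp: periodic_factor_def)
  define s where "s = i div 19"
  define m where "m = (n + 18) div 19"
  have i: "19 * s + i mod 19 = i" "i mod 19 < 19"
    unfolding s_def by simp_all
  have m: "19 * m \<le> n + 18" "n + 18 < 19 * m + 19"
    unfolding m_def by simp_all
  have "19 * (s + m) < 19 * (length w + 1)"
    unfolding distrib_left using i m len by linarith
  then have "s + m \<le> length w" by simp
  moreover have "w ! (s + k) = w ! (s + k + p)" if "k + p < m" for k
  proof (rule morph_nth_cancel[OF assms(1) _ _ i(2)])
    show "s + k < length w" "s + k + p < length w"
      using that \<open>s + m \<le> length w\<close> by linarith+
    have e: "19 * (s + k) + i mod 19 = i + 19 * k"
      "19 * (s + k + p) + i mod 19 = i + 19 * k + 19 * p"
      using i(1) unfolding distrib_left by linarith+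
    show "morph w ! (19 * (s + k) + i mod 19) = morph w ! (19 * (s + k + p) + i mod 19)"
      unfolding e by (rule per) (use that m in linarith)
  qed
  ultimately show ?thesis
    using p by (auto simp: periodic_factor_def s_def m_def)
qed

lemma seven_fourths_free_morph:
  assumes "seven_fourths_free w" and "set w \<subseteq> {..<3}"
  shows "seven_fourths_free (morph w)"
  unfolding seven_fourths_free_def
proof (intro allI impI, rule ccontr)
  fix i n p assume pf: "periodic_factor (morph w) i n p" and "\<not> 4 * n \<le> 7 * p"
  define n' where "n' = 7 * p div 4 + 1"
  have "4 * (7 * p div 4) \<le> 7 * p" "7 * p < 4 * (7 * p div 4) + 4"
    using div_mult_mod_eq[of "7 * p" 4] mod_less_divisor[of 4 "7 * p"] by linarith+
  then have n': "7 * p < 4 * n'" "n' \<le> n"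
    using \<open>\<not> 4 * n \<le> 7 * p\<close> unfolding n'_def distrib_left by linarith+
  have p: "1 \<le> p" and len: "i + n' \<le> 19 * length w"
    and per: "\<And>k. k + p < n' \<Longrightarrow> morph w ! (i + k) = morph w ! (i + k + p)"
    using periodic_factor_shorten[OF pf n'(2)] by (auto simp: periodic_factor_def)
  show False
  proof (cases "p + 10 \<le> n'")
    case True
    have "i mod 19 = (i + p) mod 19"
    proof (rule morph_window_offset[OF assms])
      fix k :: nat assume "k < 10"
      then show "morph w ! (i + k) = morph w ! (i + p + k)"
        using per[of k] True by (simp add: ac_simps)
    qed (use True len in linarith)+
    then have "19 dvd p"
      using mod_eq_dvd_iff_nat[of i "i + p" 19] by simp
    then obtain P where P: "p = 19 * P" ..
    have "periodic_factor (morph w) i n' (19 * P)"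
      using periodic_factor_shorten[OF pf n'(2)] P by simp
    then have "periodic_factor w (i div 19) ((n' + 18) div 19) P"
      by (rule morph_periodic_factor_pullback[OF assms(2)])
    then have "4 * ((n' + 18) div 19) \<le> 7 * P"
      using assms(1) unfolding seven_fourths_free_def by blast
    moreover have "n' + 18 < 19 * ((n' + 18) div 19) + 19"
      by simp
    ultimately show False using n'(1) P by linarith
  next
    case False
    then have "p < 12" "n' \<le> 20" "0 < n'" using n' by linarith+
    obtain u where u: "u \<in> set pair_images"
        "\<And>k. k < n' \<Longrightarrow> morph w ! (i + k) = u ! (i mod 19 + k)"
      using morph_factor_in_pair_image[OF assms len \<open>n' \<le> 20\<close> \<open>0 < n'\<close>] by blast
    have "i mod 19 < 19" by simp
    then obtain k where k: "k + p < n'" "u ! (i mod 19 + k) \<noteq> u ! (i mod 19 + k + p)"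
      unfolding n'_def by (rule pair_image_short_period_mismatch[OF u(1) _ p \<open>p < 12\<close>])
    have "u ! (i mod 19 + k) = morph w ! (i + k)"
      using u(2)[of k] k(1) by simp
    also have "\<dots> = morph w ! (i + (k + p))"
      using per[OF k(1)] by (simp add: add.assoc)
    also have "\<dots> = u ! (i mod 19 + k + p)"
      using u(2)[of "k + p"] k(1) by (simp add: add.assoc)
    finally show False using k(2) by contradiction
  qed
qed

lemma length_morph_iterate: "length ((morph ^^ k) [0]) = 19 ^ k"
  by (induction k) auto

lemma set_morph_iterate: "set ((morph ^^ k) [0]) \<subseteq> {..<3}"
  by (cases k) (auto simp: set_morph)

lemma palindrome_morph_iterate: "palindrome ((morph ^^ k) [0])"
  by (induction k) (auto simp: palindrome_def rev_morph)

lemma seven_fourths_free_morph_iterate: "seven_fourths_free ((morph ^^ k) [0])"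
proof (induction k)
  case 0
  show ?case by (auto simp: seven_fourths_free_def periodic_factor_def)
next
  case (Suc k)
  then show ?case using seven_fourths_free_morph set_morph_iterate by simp
qed

lemma morph_block_has_period_4:
  assumes "t < length w"
  shows "has_period (take 7 (drop (19 * t + 1) (morph w))) 4"
  unfolding has_period_def
proof (intro conjI allI impI)
  fix x assume x: "x + 4 < length (take 7 (drop (19 * t + 1) (morph w)))"
  then have "x < 3" by simp
  then have "morph0 ! (1 + x) = morph0 ! (1 + x + 4)"
    by (auto simp: morph0_def less_Suc_eq numeral_3_eq_3)
  then show "take 7 (drop (19 * t + 1) (morph w)) ! x = take 7 (drop (19 * t + 1) (morph w)) ! (x + 4)"
    using x assms \<open>x < 3\<close> nth_morph[OF assms, of "1 + x"] nth_morph[OF assms, of "1 + x + 4"]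
    by (simp add: ac_simps)
qed simp

lemma palindrome_central_factor:
  assumes "palindrome x" and "length x = 2 * c + 1" and "m \<le> c"
  shows "palindrome (take (2 * m + 1) (drop (c - m) x))"
  using assms by (simp add: palindrome_def rev_take rev_drop drop_take mult_2)

lemma less_19_power: "m < 19 ^ m"
  by (induction m) auto

lemma sublist_take_drop: "sublist (take n (drop k xs)) xs"
  using sublist_order.order_trans by blast

lemma central_factor_contains_block:
  assumes "8 \<le> m" and "m \<le> c"
  shows "sublist (take 7 (drop (c - 8) xs)) (take (2 * m + 1) (drop (c - m) xs))"
proof -
  have "take 7 (drop (c - 8) xs) = take 7 (drop (m - 8) (take (2 * m + 1) (drop (c - m) xs)))"
    using assms by (simp add: drop_take take_take)
  then show ?thesis by (simp only: sublist_take_drop)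
qed

lemma central_factor_of_morph_iterate:
  assumes "8 \<le> m"
  obtains w u :: "nat list" where "length w = 2 * m + 1" and "set w \<subseteq> {..<3}" and "palindrome w"
    and "seven_fourths_free w" and "sublist u w" and "length u = 7" and "has_period u 4"
proof -
  define v where "v = (morph ^^ m) [0]"
  have "odd (length v)" by (simp add: v_def length_morph_iterate)
  then obtain c where c: "length v = 2 * c + 1" by (rule oddE)
  define C where "C = 19 * c + 9"
  have "m < length v" using less_19_power[of m] by (simp add: v_def length_morph_iterate)
  then have center: "m \<le> C" "length (morph v) = 2 * C + 1" "C - 8 = 19 * c + 1"
    using c by (simp_all add: C_def)
  define w where "w = take (2 * m + 1) (drop (C - m) (morph v))"
  define u where "u = take 7 (drop (19 * c + 1) (morph v))"
  show ?thesis
  proof (rule that[of w u])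
    show "length w = 2 * m + 1" "length u = 7"
      using center c by (simp_all add: w_def u_def)
    show "set w \<subseteq> {..<3}"
      using set_mono_sublist[OF sublist_take_drop, of "2 * m + 1" "C - m" "morph v"] set_morph[of v]
      unfolding w_def by blast
    show "palindrome w"
      unfolding w_def using palindrome_morph_iterate[of "Suc m"] center(2,1)
      by (intro palindrome_central_factor) (simp_all add: v_def)
    show "seven_fourths_free w"
      using seven_fourths_free_morph_iterate[of "Suc m"]
      by (rule seven_fourths_free_sublist) (simp add: w_def v_def sublist_take_drop)
    show "sublist u w"
      unfolding w_def u_def center(3)[symmetric] using assms center(1)
      by (rule central_factor_contains_block)
    show "has_period u 4"
      unfolding u_def by (rule morph_block_has_period_4) (use c in simp)
  qed
qed

theorem mainTheorem5:
  fixes l :: nat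
  assumes "odd l" and "l \<ge> 17"
  shows "\<exists>w :: nat list. length w = l \<and> set w \<subseteq> {0, 1, 2} \<and> palindrome w
           \<and> critical_exponent w = 7 / 4"
proof -
  obtain m where l: "l = 2 * m + 1"
    using assms(1) oddE by blast
  then have "8 \<le> m" using assms(2) by linarith
  then obtain w u :: "nat list" where w: "length w = l" "set w \<subseteq> {..<3}" "palindrome w"
    and u: "seven_fourths_free w" "sublist u w" "length u = 7" "has_period u 4"
    unfolding l by (rule central_factor_of_morph_iterate)
  from u have "critical_exponent w = 7 / 4"
    by (rule critical_exponent_eq_seven_fourths)
  moreover have "{..<3} = {0, 1, 2 :: nat}"
    by (auto simp: numeral_3_eq_3 less_Suc_eq)
  ultimately show ?thesis
    using w by auto
qed

end
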